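(* Let $k,n\in\mathbb{N}$ with $k\ge 2$, let $\mathbb{F}\subset\mathbb{C}$ be a field, let $P\in\mathbb{F}[x]$ be a polynomial of degree $k$ with leading coefficient $1$, and let $f\colon\mathbb{F}\to\mathbb{C}$ be a generalized monomial of degree $n$. If the mapping $\mathbb{F}\ni x\mapsto f(P(x))$ is a normal polynomial, then the mapping $\mathbb{F}\ni x\mapsto f(x^k)$ is also a normal polynomial.
   Context: A function $A\colon\mathbb{F}^k\to\mathbb{C}$ is $k$-additive if it is additive (with respect to the additive group of $\mathbb{F}$) in each variable. A function $f\colon\mathbb{F}\to\mathbb{C}$ is a generalized monomial of degree $k$ if there is a symmetric $k$-additive $A\colon\mathbb{F}^k\to\mathbb{C}$ with $f(x)=A(x,\ldots,x)$ for all $x\in\mathbb{F}$. A function $p\colon\mathbb{F}\to\mathbb{C}$ is a normal polynomial if there exist $m\in\mathbb{N}$, additive functions $a_1,\ldots,a_m\colon\mathbb{F}\to\mathbb{C}$ and a complex polynomial $Q\in\mathbb{C}[x_1,\ldots,x_m]$ with $p(x)=Q(a_1(x),\ldots,a_m(x))$ for all $x\in\mathbb{F}$. *)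

theory Defs
  imports "HOL-Computational_Algebra.Polynomial" "HOL-Library.Multiset" Complex_Main
begin

definition subfield_of_complex :: "complex set \<Rightarrow> bool" where
  "subfield_of_complex F \<longleftrightarrow>
     0 \<in> F \<and> 1 \<in> F \<and>
     (\<forall>x\<in>F. \<forall>y\<in>F. x + y \<in> F \<and> x - y \<in> F \<and> x * y \<in> F) \<and>
     (\<forall>x\<in>F. x \<noteq> 0 \<longrightarrow> inverse x \<in> F)"

definition additive_on :: "complex set \<Rightarrow> (complex \<Rightarrow> complex) \<Rightarrow> bool" where
  "additive_on F a \<longleftrightarrow> (\<forall>x\<in>F. \<forall>y\<in>F. a (x + y) = a x + a y)"

text \<open>A k-additive map F^k \<rightarrow> C, arguments given as lists of length k.\<close>
definition multi_additive_on :: "complex set \<Rightarrow> nat \<Rightarrow> (complex list \<Rightarrow> complex) \<Rightarrow> bool" where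
  "multi_additive_on F k A \<longleftrightarrow>
     (\<forall>xs i y z. set xs \<subseteq> F \<and> length xs = k \<and> i < k \<and> y \<in> F \<and> z \<in> F \<longrightarrow>
        A (xs[i := y + z]) = A (xs[i := y]) + A (xs[i := z]))"

definition symmetric_on :: "complex set \<Rightarrow> nat \<Rightarrow> (complex list \<Rightarrow> complex) \<Rightarrow> bool" where
  "symmetric_on F k A \<longleftrightarrow>
     (\<forall>xs ys. set xs \<subseteq> F \<and> length xs = k \<and> mset ys = mset xs \<longrightarrow> A ys = A xs)"

definition generalized_monomial :: "complex set \<Rightarrow> nat \<Rightarrow> (complex \<Rightarrow> complex) \<Rightarrow> bool" where
  "generalized_monomial F k f \<longleftrightarrow>
     (\<exists>A. multi_additive_on F k A \<and> symmetric_on F k A \<and>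
          (\<forall>x\<in>F. f x = A (replicate k x)))"

text \<open>Normal polynomial: p = Q(a_1,...,a_m) with a_i additive and Q a complex polynomial
  in m variables, written out as a finite linear combination of monomials
  (exponent vectors alpha, monomial \<Prod>i<m. y_i ^ alpha i).\<close>
definition normal_polynomial :: "complex set \<Rightarrow> (complex \<Rightarrow> complex) \<Rightarrow> bool" where
  "normal_polynomial F p \<longleftrightarrow>
     (\<exists>(m::nat) (a :: nat \<Rightarrow> complex \<Rightarrow> complex) (S :: (nat \<Rightarrow> nat) set) (c :: (nat \<Rightarrow> nat) \<Rightarrow> complex).
        (\<forall>i<m. additive_on F (a i)) \<and> finite S \<and>
        (\<forall>x\<in>F. p x = (\<Sum>\<alpha>\<in>S. c \<alpha> * (\<Prod>i<m. (a i x) ^ (\<alpha> i)))))"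

end

theory Submission
  imports Defs
begin

text \<open>Fix \<open>x \<in> F\<close>. Expanding \<open>P(r x) = \<Sum>\<^sub>d r\<^sup>d p\<^sub>d x\<^sup>d\<close> (\<open>p\<^sub>d\<close> the coefficients of \<open>P\<close>) in every argument of the
  \<open>n\<close>-additive map \<open>A\<close> with \<open>f(y) = A(y,\<dots>,y)\<close> shows that \<open>r \<mapsto> f(P(r x))\<close>, for
  \<open>r \<in> \<nat>\<close>, is a polynomial \<open>q\<close> of degree at most \<open>D = k n\<close> whose coefficient of \<open>r\<^sup>D\<close> is
  \<open>A(x\<^sup>k,\<dots>,x\<^sup>k) = f(x\<^sup>k)\<close>. The \<open>D\<close>-th finite difference of \<open>q\<close> at \<open>0\<close> is \<open>D!\<close> times that
  coefficient, so \<open>f(x\<^sup>k)\<close> is a fixed linear combination of the values \<open>f(P(j x))\<close>,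
  \<open>j = 0,\<dots>,D\<close>. Each \<open>x \<mapsto> f(P(j x))\<close> is a normal polynomial, and normal polynomials
  are closed under linear combinations.\<close>

lemma sum_alternating_binomial_power:
  assumes "d \<le> D"
  shows "(\<Sum>j\<le>D. (-1)^j * of_nat (D choose j) * of_nat j ^ d)
    = (if d = D then (-1)^D * of_nat (fact D) else (0 :: 'a :: comm_ring_1))"
  using assms
proof (induction D arbitrary: d)
  case 0
  then show ?case by simp
next
  case (Suc D)
  show ?case
  proof (cases d)
    case 0
    then show ?thesis using choose_alternating_sum[of "Suc D", where 'a='a] by simp
  next
    case (Suc e)
    with Suc.prems have "e \<le> D" by simp
    \<comment> \<open>absorb one factor \<open>j\<close> via \<open>j \<cdot> (D+1 choose j) = (D+1) \<cdot> (D choose j-1)\<close>,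
      then expand \<open>j\<^sup>e\<close> binomially\<close>
    have absorb: "(-1)^(Suc i) * of_nat (Suc D choose Suc i) * of_nat (Suc i) ^ Suc e
        = - of_nat (Suc D) * ((-1)^i * of_nat (D choose i) * (of_nat i + 1) ^ e :: 'a)" for i
    proof -
      have absorb_choose:
        "of_nat (Suc D choose Suc i) * of_nat (Suc i) = (of_nat (Suc D) * of_nat (D choose i) :: 'a)"
        using Suc_times_binomial[of i D] by (metis mult.commute of_nat_mult)
      have "(-1)^(Suc i) * of_nat (Suc D choose Suc i) * of_nat (Suc i) ^ Suc e
          = - ((-1)^i * (of_nat (Suc D choose Suc i) * of_nat (Suc i)) * of_nat (Suc i) ^ e :: 'a)"
        by (simp add: algebra_simps)
      then show ?thesis unfolding absorb_choose by (simp add: algebra_simps)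
    qed
    have "(\<Sum>j\<le>Suc D. (-1)^j * of_nat (Suc D choose j) * of_nat j ^ d :: 'a)
      = (\<Sum>i\<le>D. (-1)^(Suc i) * of_nat (Suc D choose Suc i) * of_nat (Suc i) ^ Suc e)"
      by (subst sum.atMost_Suc_shift) (simp add: Suc)
    also have "\<dots> = - of_nat (Suc D) * (\<Sum>i\<le>D. (-1)^i * of_nat (D choose i) * (of_nat i + 1) ^ e)"
      by (simp only: absorb sum_distrib_left)
    also have "(\<Sum>i\<le>D. (-1)^i * of_nat (D choose i) * (of_nat i + 1) ^ e :: 'a)
       = (\<Sum>i\<le>D. \<Sum>t\<le>e. of_nat (e choose t) * ((-1)^i * of_nat (D choose i) * of_nat i ^ t))"
      by (intro sum.cong refl) (subst binomial_ring, simp add: sum_distrib_left algebra_simps)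
    also have "\<dots> = (\<Sum>t\<le>e. of_nat (e choose t) * (\<Sum>i\<le>D. (-1)^i * of_nat (D choose i) * of_nat i ^ t))"
      by (subst sum.swap) (simp add: sum_distrib_left)
    also have "\<dots> = (\<Sum>t\<le>e. if t = D then (-1)^D * of_nat (fact D) else 0)"
      by (rule sum.cong) (use Suc.IH \<open>e \<le> D\<close> in auto)
    finally show ?thesis
      using \<open>e \<le> D\<close> by (auto simp: Suc algebra_simps)
  qed
qed

lemma sum_alternating_binomial_poly:
  fixes q :: "'a :: comm_ring_1 poly"
  assumes "degree q \<le> D"
  shows "(\<Sum>j\<le>D. (-1)^j * of_nat (D choose j) * poly q (of_nat j))
    = (-1)^D * of_nat (fact D) * coeff q D"
proof -
  have poly_q: "poly q z = (\<Sum>d\<le>D. coeff q d * z ^ d)" for z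
    unfolding poly_altdef
    by (rule sum.mono_neutral_left) (use assms in \<open>auto simp: coeff_eq_0\<close>)
  have "(\<Sum>j\<le>D. (-1)^j * of_nat (D choose j) * poly q (of_nat j))
      = (\<Sum>j\<le>D. \<Sum>d\<le>D. coeff q d * ((-1)^j * of_nat (D choose j) * of_nat j ^ d))"
    by (simp add: poly_q sum_distrib_left algebra_simps)
  also have "\<dots> = (\<Sum>d\<le>D. coeff q d * (\<Sum>j\<le>D. (-1)^j * of_nat (D choose j) * of_nat j ^ d))"
    by (subst sum.swap) (simp add: sum_distrib_left)
  also have "\<dots> = (\<Sum>d\<le>D. if d = D then coeff q D * ((-1)^D * of_nat (fact D)) else 0)"
    by (intro sum.cong refl) (simp add: sum_alternating_binomial_power)
  finally show ?thesis by (simp add: algebra_simps)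
qed

lemma subfield_of_complex_zero: "subfield_of_complex F \<Longrightarrow> 0 \<in> F"
  and subfield_of_complex_one: "subfield_of_complex F \<Longrightarrow> 1 \<in> F"
  and subfield_of_complex_add: "subfield_of_complex F \<Longrightarrow> x \<in> F \<Longrightarrow> y \<in> F \<Longrightarrow> x + y \<in> F"
  and subfield_of_complex_mult: "subfield_of_complex F \<Longrightarrow> x \<in> F \<Longrightarrow> y \<in> F \<Longrightarrow> x * y \<in> F"
  by (auto simp: subfield_of_complex_def)

lemma subfield_of_complex_sum:
  "subfield_of_complex F \<Longrightarrow> (\<And>j. j \<in> J \<Longrightarrow> g j \<in> F) \<Longrightarrow> sum g J \<in> F"
  by (induction J rule: infinite_finite_induct)
    (auto intro: subfield_of_complex_zero subfield_of_complex_add)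

lemma subfield_of_complex_power: "subfield_of_complex F \<Longrightarrow> x \<in> F \<Longrightarrow> x ^ n \<in> F"
  by (induction n) (auto intro: subfield_of_complex_one subfield_of_complex_mult)

lemma subfield_of_complex_of_nat: "subfield_of_complex F \<Longrightarrow> of_nat n \<in> F"
  by (induction n) (auto intro: subfield_of_complex_zero subfield_of_complex_one subfield_of_complex_add)

lemma subfield_of_complex_poly:
  "subfield_of_complex F \<Longrightarrow> \<forall>i. coeff P i \<in> F \<Longrightarrow> x \<in> F \<Longrightarrow> poly P x \<in> F"
  unfolding poly_altdef
  by (auto intro: subfield_of_complex_sum subfield_of_complex_mult subfield_of_complex_power)

lemma multi_additive_on_add_at:
  assumes "multi_additive_on F n A" "set xs \<subseteq> F" "set ys \<subseteq> F"
    and "length xs + Suc (length ys) = n" "y \<in> F" "z \<in> F"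
  shows "A (xs @ (y + z) # ys) = A (xs @ y # ys) + A (xs @ z # ys)"
proof -
  have "set (xs @ y # ys) \<subseteq> F" "length (xs @ y # ys) = n" "length xs < n"
    using assms by auto
  then have "A ((xs @ y # ys)[length xs := y + z])
      = A ((xs @ y # ys)[length xs := y]) + A ((xs @ y # ys)[length xs := z])"
    using assms(1,5,6) unfolding multi_additive_on_def by blast
  then show ?thesis
    by simp
qed

lemma multi_additive_on_sum_at:
  assumes ma: "multi_additive_on F n A" and sf: "subfield_of_complex F"
    and "set xs \<subseteq> F" "set ys \<subseteq> F" "length xs + Suc (length ys) = n"
    and "finite J" "\<And>j. j \<in> J \<Longrightarrow> g j \<in> F"
  shows "A (xs @ sum g J # ys) = (\<Sum>j\<in>J. A (xs @ g j # ys))"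
  using assms(6,7)
proof (induction J rule: finite_induct)
  case empty
  have "A (xs @ (0 + 0) # ys) = A (xs @ 0 # ys) + A (xs @ 0 # ys)"
    using multi_additive_on_add_at[OF ma assms(3-5)] subfield_of_complex_zero[OF sf] by blast
  then show ?case by simp
next
  case (insert j J)
  then show ?case
    using multi_additive_on_add_at[OF ma assms(3-5), of "g j" "sum g J"]
      subfield_of_complex_sum[OF sf, of J g] by simp
qed

lemma multi_additive_on_of_nat_mult_at:
  assumes "multi_additive_on F n A" "subfield_of_complex F"
    and "set xs \<subseteq> F" "set ys \<subseteq> F" "length xs + Suc (length ys) = n" "z \<in> F"
  shows "A (xs @ (of_nat N * z) # ys) = of_nat N * A (xs @ z # ys)"
  using multi_additive_on_sum_at[OF assms(1-5), of "{..<N}" "\<lambda>_. z"] assms(6) by simp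

lemma multi_additive_on_polynomial_curve:
  fixes e :: "nat \<Rightarrow> complex"
  assumes ma: "multi_additive_on F n A" and sf: "subfield_of_complex F" and eF: "\<And>d. e d \<in> F"
    and "set ys \<subseteq> F" and "p + length ys = n"
  shows "\<exists>q. degree q \<le> K * p \<and> coeff q (K * p) = A (replicate p (e K) @ ys)
    \<and> (\<forall>r::nat. A (replicate p (\<Sum>d\<le>K. of_nat r ^ d * e d) @ ys) = poly q (of_nat r))"
  using assms(4,5)
proof (induction p arbitrary: ys)
  case 0
  show ?case by (rule exI[of _ "[:A ys:]"]) simp
next
  case (Suc p)
  define y where "y r = (\<Sum>d\<le>K. of_nat r ^ d * e d)" for r :: nat
  have term_F: "of_nat r ^ d * e d \<in> F" for r d
    by (intro subfield_of_complex_mult subfield_of_complex_power subfield_of_complex_of_nat sf eF)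
  then have yF: "y r \<in> F" for r
    unfolding y_def by (intro subfield_of_complex_sum sf)
  have "\<forall>d. \<exists>q. degree q \<le> K * p \<and> coeff q (K * p) = A (replicate p (e K) @ e d # ys)
    \<and> (\<forall>r::nat. A (replicate p (y r) @ e d # ys) = poly q (of_nat r))"
    using Suc.IH Suc.prems eF unfolding y_def by simp
  then obtain Q where Q_degree: "\<And>d. degree (Q d) \<le> K * p"
    and Q_coeff: "\<And>d. coeff (Q d) (K * p) = A (replicate p (e K) @ e d # ys)"
    and Q_poly: "\<And>d r. A (replicate p (y r) @ e d # ys) = poly (Q d) (of_nat r)"
    by metis
  define q where "q = (\<Sum>d\<le>K. monom 1 d * Q d)"
  have "A (replicate (Suc p) (y r) @ ys) = poly q (of_nat r)" for r
  proof -
    have at: "set (replicate p (y r)) \<subseteq> F" "length (replicate p (y r)) + Suc (length ys) = n"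
      using yF Suc.prems by auto
    have "A (replicate (Suc p) (y r) @ ys) = A (replicate p (y r) @ y r # ys)"
      by (simp add: replicate_app_Cons_same)
    also have "\<dots> = (\<Sum>d\<le>K. A (replicate p (y r) @ (of_nat (r ^ d) * e d) # ys))"
    proof -
      have "y r = (\<Sum>d\<le>K. of_nat (r ^ d) * e d)"
        by (simp add: y_def)
      then show ?thesis
        using multi_additive_on_sum_at[OF ma sf at(1) Suc.prems(1) at(2), of "{..K}"] term_F
        by (simp del: of_nat_power add: of_nat_power[symmetric])
    qed
    also have "\<dots> = (\<Sum>d\<le>K. of_nat r ^ d * poly (Q d) (of_nat r))"
      by (intro sum.cong refl)
        (metis multi_additive_on_of_nat_mult_at[OF ma sf at(1) Suc.prems(1) at(2) eF] Q_poly of_nat_power)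
    also have "\<dots> = poly q (of_nat r)"
      by (simp add: q_def poly_sum poly_monom)
    finally show ?thesis .
  qed
  moreover have "degree q \<le> K * Suc p"
    unfolding q_def
  proof (rule degree_sum_le)
    fix d assume "d \<in> {..K}"
    have "degree (monom (1::complex) d * Q d) \<le> d + K * p"
      by (rule order_trans[OF degree_mult_le add_mono[OF degree_monom_le Q_degree]])
    with \<open>d \<in> {..K}\<close> show "degree (monom (1::complex) d * Q d) \<le> K * Suc p"
      by auto
  qed simp
  moreover have "coeff q (K * Suc p) = A (replicate (Suc p) (e K) @ ys)"
  proof -
    have "coeff (monom 1 d * Q d) (K * Suc p) = (if d = K then coeff (Q K) (K * p) else 0)"
      if "d \<le> K" for d
      using that Q_degree[of d] by (auto simp: coeff_monom_mult intro!: coeff_eq_0)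
    then have "coeff q (K * Suc p) = coeff (Q K) (K * p)"
      by (simp add: q_def coeff_sum)
    then show ?thesis
      by (simp add: Q_coeff replicate_app_Cons_same)
  qed
  ultimately show ?case
    unfolding y_def by blast
qed

lemma generalized_monomial_along_poly:
  assumes "generalized_monomial F n f" "subfield_of_complex F" "\<forall>i. coeff P i \<in> F" "x \<in> F"
  shows "\<exists>q. degree q \<le> degree P * n \<and> coeff q (degree P * n) = f (lead_coeff P * x ^ degree P)
    \<and> (\<forall>r::nat. f (poly P (of_nat r * x)) = poly q (of_nat r))"
proof -
  obtain A where ma: "multi_additive_on F n A" and fA: "\<And>y. y \<in> F \<Longrightarrow> f y = A (replicate n y)"
    using assms(1) unfolding generalized_monomial_def by blast
  define e where "e d = coeff P d * x ^ d" for d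
  have eF: "e d \<in> F" for d
    unfolding e_def using assms(2-4) by (simp add: subfield_of_complex_mult subfield_of_complex_power)
  have poly_P: "poly P (of_nat r * x) = (\<Sum>d\<le>degree P. of_nat r ^ d * e d)" for r :: nat
    unfolding poly_altdef e_def by (simp add: algebra_simps)
  have "poly P (of_nat r * x) \<in> F" for r :: nat
    using assms(2-4) by (intro subfield_of_complex_poly subfield_of_complex_mult subfield_of_complex_of_nat)
  then show ?thesis
    using multi_additive_on_polynomial_curve[OF ma assms(2) eF, of "[]" n "degree P"] eF[of "degree P"]
    by (simp add: fA poly_P e_def)
qed

lemma normal_polynomialE:
  assumes "normal_polynomial F p"
  obtains m a and S :: "(nat \<Rightarrow> nat) set" and c where "\<forall>i<m. additive_on F (a i)" "finite S"
    "\<forall>x\<in>F. p x = (\<Sum>\<alpha>\<in>S. c \<alpha> * (\<Prod>i<m. a i x ^ \<alpha> i))"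
  using assms unfolding normal_polynomial_def by blast

text \<open>Exponent vectors may be given through an arbitrary, not necessarily injective,
  indexing \<open>e\<close>; terms with equal exponent vectors are merged.\<close>

lemma normal_polynomialI:
  fixes e :: "'b \<Rightarrow> nat \<Rightarrow> nat"
  assumes "\<forall>i<m. additive_on F (a i)" "finite S"
    and "\<forall>x\<in>F. p x = (\<Sum>s\<in>S. c s * (\<Prod>i<m. a i x ^ e s i))"
  shows "normal_polynomial F p"
proof -
  define c' where "c' \<alpha> = (\<Sum>s\<in>{s \<in> S. e s = \<alpha>}. c s)" for \<alpha>
  have "p x = (\<Sum>\<alpha>\<in>e ` S. c' \<alpha> * (\<Prod>i<m. a i x ^ \<alpha> i))" if "x \<in> F" for x
    using assms(3) that sum.image_gen[OF assms(2), of "\<lambda>s. c s * (\<Prod>i<m. a i x ^ e s i)" e]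
    by (simp add: c'_def sum_distrib_right)
  then show ?thesis
    unfolding normal_polynomial_def using assms(1,2) by blast
qed

lemma normal_polynomial_cong:
  "normal_polynomial F p \<Longrightarrow> (\<And>x. x \<in> F \<Longrightarrow> q x = p x) \<Longrightarrow> normal_polynomial F q"
  unfolding normal_polynomial_def by metis

lemma normal_polynomial_zero: "normal_polynomial F (\<lambda>x. 0)"
  by (rule normal_polynomialI[where S = "{}" and m = 0]) auto

lemma normal_polynomial_cmult:
  assumes "normal_polynomial F p"
  shows "normal_polynomial F (\<lambda>x. c * p x)"
proof -
  obtain m a and S :: "(nat \<Rightarrow> nat) set" and cp where "\<forall>i<m. additive_on F (a i)" "finite S"
    "\<forall>x\<in>F. p x = (\<Sum>\<alpha>\<in>S. cp \<alpha> * (\<Prod>i<m. a i x ^ \<alpha> i))"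
    using assms by (rule normal_polynomialE)
  then show ?thesis
    by (intro normal_polynomialI[where c = "\<lambda>\<alpha>. c * cp \<alpha>" and e = id])
      (auto simp: sum_distrib_left algebra_simps)
qed

lemma normal_polynomial_compose_mult:
  assumes "normal_polynomial F p" "subfield_of_complex F" "c \<in> F"
  shows "normal_polynomial F (\<lambda>x. p (c * x))"
proof -
  obtain m a and S :: "(nat \<Rightarrow> nat) set" and cp where add: "\<forall>i<m. additive_on F (a i)" and "finite S"
    and p: "\<forall>x\<in>F. p x = (\<Sum>\<alpha>\<in>S. cp \<alpha> * (\<Prod>i<m. a i x ^ \<alpha> i))"
    using assms(1) by (rule normal_polynomialE)
  have cF: "c * x \<in> F" if "x \<in> F" for x
    using subfield_of_complex_mult[OF assms(2,3) that] .
  have "additive_on F (\<lambda>x. a i (c * x))" if "i < m" for i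
    using add that cF unfolding additive_on_def
    by (simp add: distrib_left subfield_of_complex_add[OF assms(2)])
  then show ?thesis
    using \<open>finite S\<close> p cF
    by (intro normal_polynomialI[where m = m and a = "\<lambda>i x. a i (c * x)" and S = S and c = cp
          and e = id]) auto
qed

lemma prod_lessThan_add:
  fixes g :: "nat \<Rightarrow> 'a :: comm_monoid_mult"
  shows "(\<Prod>i<m1 + m2. g i) = (\<Prod>i<m1. g i) * (\<Prod>i<m2. g (i + m1))"
proof -
  have "(\<Prod>i<m1 + m2. g i) = (\<Prod>i\<in>{0..<m1}. g i) * (\<Prod>i\<in>{m1..<m1 + m2}. g i)"
    by (simp add: atLeast0LessThan[symmetric] prod.atLeastLessThan_concat)
  also have "(\<Prod>i\<in>{m1..<m1 + m2}. g i) = (\<Prod>i\<in>{0..<m2}. g (i + m1))"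
    using prod.shift_bounds_nat_ivl[of g 0 m1 m2] by (simp add: add.commute)
  finally show ?thesis by (simp add: atLeast0LessThan)
qed

text \<open>The additive functions of the two summands are concatenated, and their exponent
  vectors are padded by zeros on the other block.\<close>

lemma normal_polynomial_add:
  assumes "normal_polynomial F p1" "normal_polynomial F p2"
  shows "normal_polynomial F (\<lambda>x. p1 x + p2 x)"
proof -
  obtain m1 a1 and S1 :: "(nat \<Rightarrow> nat) set" and c1 where h1: "\<forall>i<m1. additive_on F (a1 i)" "finite S1"
    "\<forall>x\<in>F. p1 x = (\<Sum>\<alpha>\<in>S1. c1 \<alpha> * (\<Prod>i<m1. a1 i x ^ \<alpha> i))"
    using assms(1) by (rule normal_polynomialE)
  obtain m2 a2 and S2 :: "(nat \<Rightarrow> nat) set" and c2 where h2: "\<forall>i<m2. additive_on F (a2 i)" "finite S2"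
    "\<forall>x\<in>F. p2 x = (\<Sum>\<alpha>\<in>S2. c2 \<alpha> * (\<Prod>i<m2. a2 i x ^ \<alpha> i))"
    using assms(2) by (rule normal_polynomialE)
  define a where "a i = (if i < m1 then a1 i else a2 (i - m1))" for i
  define e :: "(nat \<Rightarrow> nat) + (nat \<Rightarrow> nat) \<Rightarrow> nat \<Rightarrow> nat" where
    "e = case_sum (\<lambda>\<alpha> i. if i < m1 then \<alpha> i else 0) (\<lambda>\<alpha> i. if i < m1 then 0 else \<alpha> (i - m1))"
  have "(\<Prod>i<m1 + m2. a i x ^ e (Inl \<alpha>) i) = (\<Prod>i<m1. a1 i x ^ \<alpha> i)"
    and "(\<Prod>i<m1 + m2. a i x ^ e (Inr \<alpha>) i) = (\<Prod>i<m2. a2 i x ^ \<alpha> i)" for x \<alpha>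
    unfolding prod_lessThan_add by (simp_all add: e_def a_def)
  then have "p1 x + p2 x
      = (\<Sum>s\<in>S1 <+> S2. case_sum c1 c2 s * (\<Prod>i<m1 + m2. a i x ^ e s i))" if "x \<in> F" for x
    using h1(2,3) h2(2,3) that by (simp add: sum.Plus comp_def)
  moreover have "\<forall>i<m1 + m2. additive_on F (a i)"
    using h1(1) h2(1) by (auto simp: a_def)
  ultimately show ?thesis
    using h1(2) h2(2)
    by (intro normal_polynomialI[where e = e and S = "S1 <+> S2" and c = "case_sum c1 c2"]) auto
qed

lemma normal_polynomial_sum:
  assumes "finite J" "\<And>j. j \<in> J \<Longrightarrow> normal_polynomial F (g j)"
  shows "normal_polynomial F (\<lambda>x. \<Sum>j\<in>J. g j x)"
  using assms
  by (induction J rule: finite_induct) (simp_all add: normal_polynomial_zero normal_polynomial_add)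

theorem lemma4:
  fixes F :: "complex set" and k n :: nat and P :: "complex poly" and f :: "complex \<Rightarrow> complex"
  assumes "k \<ge> 2"
    and "subfield_of_complex F"
    and "\<forall>i. coeff P i \<in> F"
    and "degree P = k"
    and "lead_coeff P = 1"
    and "generalized_monomial F n f"
    and "normal_polynomial F (\<lambda>x. f (poly P x))"
  shows "normal_polynomial F (\<lambda>x. f (x ^ k))"
proof -
  define D where "D = k * n"
  define w :: "nat \<Rightarrow> complex"
    where "w j = (-1)^j * of_nat (D choose j) / ((-1)^D * of_nat (fact D))" for j
  have "f (x ^ k) = (\<Sum>j\<le>D. w j * f (poly P (of_nat j * x)))" if xF: "x \<in> F" for x
  proof -
    obtain q where q: "degree q \<le> D" "coeff q D = f (x ^ k)"
      "\<And>r::nat. f (poly P (of_nat r * x)) = poly q (of_nat r)"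
      using generalized_monomial_along_poly[OF assms(6,2,3) xF] assms(4,5)
      unfolding D_def by auto
    have "(\<Sum>j\<le>D. (-1)^j * of_nat (D choose j) * f (poly P (of_nat j * x)))
        = (-1)^D * of_nat (fact D) * f (x ^ k)"
      using sum_alternating_binomial_poly[OF q(1)] by (simp add: q)
    then show ?thesis
      unfolding w_def by (simp add: sum_divide_distrib[symmetric] field_simps)
  qed
  moreover have "normal_polynomial F (\<lambda>x. \<Sum>j\<le>D. w j * f (poly P (of_nat j * x)))"
    using assms(2,7) subfield_of_complex_of_nat
    by (intro normal_polynomial_sum normal_polynomial_cmult normal_polynomial_compose_mult) auto
  ultimately show ?thesis
    by (rule normal_polynomial_cong[rotated])
qed

end
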